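(* Let $(\Omega,\mathcal F,\Pr)$ be a probability space with filtration $\{\mathcal F_n\}_{n\ge0}$, let $\alpha>0$, $\xi>0$, and let $\{T_n\}_{n\ge0}\subset(0,1)$ be strictly decreasing and deterministic with $\sum_nT_n=\infty$, $\sum_nT_n^2<\infty$. Let $\{z_n\}$ be non-negative and adapted with $\mathbb{E}[z_{n+1}\mid\mathcal F_n]\le(1-\alpha T_n)z_n+\xi T_n$ a.s., and suppose there is a constant $B_1\ge\alpha$ with $|z_{n+1}-z_n|\le B_1T_n(z_n+1)$ a.s. for all $n$. Assume in addition that there is a constant $\eta>0$ with (A1) $\liminf_{n\to\infty} nT_n>\frac{\eta}{2\alpha}$; and (A2) $\sum_n (n+1)^\eta T_n^2<\infty$. Then $$\lim_{n\to\infty} n^{\eta/2}\, d\big(z_n,[0,\xi/\alpha]\big)=0\quad\text{a.s.}$$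
   Context: For $z\in\mathbb R$ and an interval $Z\subset\mathbb R$, $d(z,Z)\doteq\inf_{\tilde z\in Z}|z-\tilde z|$. *)

theory Defs
  imports "HOL-Probability.Probability"
begin

end

theory Submission
  imports Defs
begin

(* Let V n = (max 0 (z n - \<xi>/\<alpha>))\<^sup>2 be the squared excess over the interval. The increment bound
   and the drift give E[V (n+1) | F n] \<le> (1 - 2\<alpha> T n + 2 B\<^sub>1\<^sup>2 (T n)\<^sup>2) V n + O((T n)\<^sup>2).
   By (A1) there is l with 2\<alpha>l > \<eta> and n T n > l eventually, so the weight (n+1) powr \<eta> grows
   in one step by at most exp (\<eta> T n / l), and W n = (n+1) powr \<eta> * V n still contracts:
   E[W (n+1) | F n] \<le> exp (-\<epsilon> T n) W n + f n with \<epsilon> > 0 and f summable by (A2).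
   W plus the tail sums of f is a nonnegative supermartingale. On a level set of W N the
   integrals of W tend to 0 because \<Sum> T n = \<infinity>, and the maximal inequality upgrades this to
   W n \<longrightarrow> 0 almost surely. Finally n powr (\<eta>/2) * d(z n, [0, \<xi>/\<alpha>]) \<le> sqrt (W n). *)

section \<open>Deterministic contraction recursions\<close>

lemma nonneg_not_summable_partial_sums_at_top:
  fixes T :: "nat \<Rightarrow> real"
  assumes nonneg: "\<And>n. 0 \<le> T n" and not_summable: "\<not> summable T"
  shows "filterlim (\<lambda>n. \<Sum>j<n. T j) at_top sequentially"
  unfolding filterlim_at_top eventually_sequentially
proof (intro allI, rule ccontr)
  fix S
  assume "\<nexists>n0. \<forall>n\<ge>n0. S \<le> (\<Sum>j<n. T j)"
  then have below: "\<exists>m\<ge>n. (\<Sum>j<m. T j) < S" for n by (auto simp: not_le)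
  have "(\<Sum>j<n. T j) \<le> S" for n
  proof -
    obtain m where "m \<ge> n" "(\<Sum>j<m. T j) < S" using below by blast
    moreover have "(\<Sum>j<n. T j) \<le> (\<Sum>j<m. T j)"
      using \<open>m \<ge> n\<close> nonneg by (intro sum_mono2) auto
    ultimately show ?thesis by simp
  qed
  then have "summable T" by (rule summableI_nonneg_bounded[OF nonneg])
  with not_summable show False ..
qed

lemma contraction_recursion_iterate:
  fixes a f T :: "nat \<Rightarrow> real"
  assumes rec: "\<And>n. n \<ge> k \<Longrightarrow> a (Suc n) \<le> exp (- \<epsilon> * T n) * a n + f n"
    and f_nonneg: "\<And>n. 0 \<le> f n" and T_nonneg: "\<And>n. 0 \<le> T n" and "0 \<le> \<epsilon>"
  shows "a (k + n) \<le> exp (- \<epsilon> * (\<Sum>j<n. T (k + j))) * a k + (\<Sum>j<n. f (k + j))"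
proof (induction n)
  case 0
  then show ?case by simp
next
  case (Suc n)
  let ?S = "\<Sum>j<n. T (k + j)" and ?F = "\<Sum>j<n. f (k + j)" and ?e = "exp (- \<epsilon> * T (k + n))"
  have "?e \<le> 1" using \<open>0 \<le> \<epsilon>\<close> T_nonneg[of "k + n"] by simp
  moreover have "0 \<le> ?F" using f_nonneg by (simp add: sum_nonneg)
  ultimately have "?e * ?F \<le> ?F" by (simp add: mult_left_le_one_le)
  have "a (k + Suc n) \<le> ?e * a (k + n) + f (k + n)"
    using rec[of "k + n"] by simp
  also have "\<dots> \<le> ?e * (exp (- \<epsilon> * ?S) * a k + ?F) + f (k + n)"
    using Suc.IH by (intro add_right_mono mult_left_mono) auto
  also have "\<dots> = exp (- \<epsilon> * (?S + T (k + n))) * a k + ?e * ?F + f (k + n)"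
    by (simp add: algebra_simps exp_add[symmetric])
  also have "\<dots> \<le> exp (- \<epsilon> * (?S + T (k + n))) * a k + ?F + f (k + n)"
    using \<open>?e * ?F \<le> ?F\<close> by simp
  finally show ?case by (simp add: add.assoc)
qed

lemma contraction_recursion_tendsto_zero:
  fixes a f T :: "nat \<Rightarrow> real"
  assumes rec: "\<And>n. n \<ge> N \<Longrightarrow> a (Suc n) \<le> exp (- \<epsilon> * T n) * a n + f n"
    and a_nonneg: "\<And>n. n \<ge> N \<Longrightarrow> 0 \<le> a n"
    and f_nonneg: "\<And>n. 0 \<le> f n" and f_summable: "summable f"
    and T_nonneg: "\<And>n. 0 \<le> T n" and T_not_summable: "\<not> summable T" and "\<epsilon> > 0"
  shows "a \<longlonglongrightarrow> 0"
proof (rule order_tendstoI)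
  fix r :: real
  assume "r < 0"
  then show "eventually (\<lambda>n. r < a n) sequentially"
    using a_nonneg unfolding eventually_sequentially by (meson less_le_trans)
next
  fix r :: real
  assume "0 < r"
  then obtain k0 where k0: "\<And>n. n \<ge> k0 \<Longrightarrow> norm (\<Sum>i. f (i + n)) < r / 2"
    using suminf_exist_split[OF _ f_summable, of "r / 2"] by auto
  define k where "k = max k0 N"
  have tail: "(\<Sum>j<m. f (k + j)) < r / 2" for m
  proof -
    have "(\<Sum>j<m. f (k + j)) \<le> (\<Sum>j. f (j + k))"
      using sum_le_suminf[of "\<lambda>j. f (j + k)" "{..<m}"] f_summable f_nonneg
      by (simp add: summable_iff_shift add.commute)
    also have "\<dots> < r / 2" using k0[of k] by (simp add: k_def)
    finally show ?thesis .
  qed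
  have "filterlim (\<lambda>m. \<Sum>j<m. T (k + j)) at_top sequentially"
    using T_nonneg T_not_summable summable_iff_shift[of T k]
    by (intro nonneg_not_summable_partial_sums_at_top) (auto simp: add.commute)
  then have "filterlim (\<lambda>m. - \<epsilon> * (\<Sum>j<m. T (k + j))) at_bot sequentially"
    using \<open>\<epsilon> > 0\<close> by (intro filterlim_tendsto_neg_mult_at_bot[OF tendsto_const]) auto
  then have "(\<lambda>m. exp (- \<epsilon> * (\<Sum>j<m. T (k + j))) * a k) \<longlonglongrightarrow> 0 * a k"
    by (intro tendsto_mult_right filterlim_compose[OF exp_at_bot])
  then have "eventually (\<lambda>m. exp (- \<epsilon> * (\<Sum>j<m. T (k + j))) * a k < r / 2) sequentially"
    using \<open>0 < r\<close> by (intro order_tendstoD) auto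
  then obtain m0 where m0: "\<And>m. m \<ge> m0 \<Longrightarrow> exp (- \<epsilon> * (\<Sum>j<m. T (k + j))) * a k < r / 2"
    unfolding eventually_sequentially by blast
  have a_shift: "a (k + m) < r" if "m \<ge> m0" for m
    using contraction_recursion_iterate[of k a \<epsilon> T f m] rec f_nonneg T_nonneg \<open>\<epsilon> > 0\<close>
      m0[OF that] tail[of m] by (simp add: k_def)
  have "a n < r" if "n \<ge> k + m0" for n
    using a_shift[of "n - k"] that by simp
  then show "eventually (\<lambda>n. a n < r) sequentially"
    unfolding eventually_sequentially by blast
qed

lemma ennreal_contraction_recursion_tendsto_zero:
  fixes I :: "nat \<Rightarrow> ennreal" and f T :: "nat \<Rightarrow> real"
  assumes rec: "\<And>n. N \<le> n \<Longrightarrow> I (Suc n) \<le> ennreal (exp (- \<epsilon> * T n)) * I n + ennreal (f n)"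
    and "I N < \<infinity>"
    and f_nonneg: "\<And>n. 0 \<le> f n" and "summable f"
    and "\<And>n. 0 \<le> T n" and "\<not> summable T" and "\<epsilon> > 0"
  shows "I \<longlonglongrightarrow> 0"
proof -
  have I_finite: "I n < \<infinity>" if "N \<le> n" for n
    using that
  proof (induction n rule: dec_induct)
    case base
    show ?case by fact
  next
    case (step n)
    then have "ennreal (exp (- \<epsilon> * T n)) * I n + ennreal (f n) < \<infinity>"
      by (simp add: ennreal_mult_less_top)
    with rec[OF step.hyps(1)] show ?case by (rule le_less_trans)
  qed
  define a where "a n = enn2real (I n)" for n
  have I_a: "I n = ennreal (a n)" if "N \<le> n" for n
    using I_finite[OF that] by (simp add: a_def ennreal_enn2real less_top)
  have "a (Suc n) \<le> exp (- \<epsilon> * T n) * a n + f n" if "N \<le> n" for n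
  proof -
    have "ennreal (a (Suc n)) \<le> ennreal (exp (- \<epsilon> * T n)) * ennreal (a n) + ennreal (f n)"
      using rec[OF that] I_a[OF that] I_a[of "Suc n"] that by simp
    also have "\<dots> = ennreal (exp (- \<epsilon> * T n) * a n + f n)"
      using f_nonneg[of n] by (simp add: a_def ennreal_mult' ennreal_plus)
    finally show ?thesis
      using f_nonneg[of n] by (subst (asm) ennreal_le_iff) (auto simp: a_def)
  qed
  then have "a \<longlonglongrightarrow> 0"
    by (rule contraction_recursion_tendsto_zero) (auto simp: a_def assms)
  then have "(\<lambda>n. ennreal (a n)) \<longlonglongrightarrow> ennreal 0"
    by (rule tendsto_ennrealI)
  moreover have "eventually (\<lambda>n. ennreal (a n) = I n) sequentially"
    using I_a unfolding eventually_sequentially by (intro exI[of _ N]) auto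
  ultimately show ?thesis
    by (simp add: tendsto_cong)
qed

section \<open>A maximal inequality for supermartingales\<close>

lemma cmult_emeasure_le_set_nn_integral:
  assumes "A \<in> sets M" and "\<And>x. x \<in> A \<Longrightarrow> c \<le> f x"
  shows "ennreal c * emeasure M A \<le> (\<integral>\<^sup>+x\<in>A. ennreal (f x) \<partial>M)"
proof -
  have "ennreal c * emeasure M A = (\<integral>\<^sup>+x. ennreal c * indicator A x \<partial>M)"
    using assms(1) by (simp add: nn_integral_cmult_indicator)
  also have "\<dots> \<le> (\<integral>\<^sup>+x\<in>A. ennreal (f x) \<partial>M)"
    using assms(2) by (intro nn_integral_mono) (auto simp: indicator_def ennreal_leI)
  finally show ?thesis .
qed

lemma set_supermartingale_maximal_ineq_finite:
  fixes U :: "nat \<Rightarrow> 'a \<Rightarrow> real"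
  assumes sub: "\<And>n. subalgebra M (F n)"
    and mono: "\<And>n m. n \<le> m \<Longrightarrow> sets (F n) \<subseteq> sets (F m)"
    and adapted: "\<And>n. U n \<in> borel_measurable (F n)"
    and super: "\<And>n B. N \<le> n \<Longrightarrow> B \<in> sets (F n) \<Longrightarrow>
      (\<integral>\<^sup>+x\<in>B. U (Suc n) x \<partial>M) \<le> (\<integral>\<^sup>+x\<in>B. U n x \<partial>M)"
    and "N \<le> k" and "B \<in> sets (F k)"
  shows "ennreal c * emeasure M (B \<inter> {x\<in>space M. \<exists>j\<in>{k..k+d}. c \<le> U j x})
    \<le> (\<integral>\<^sup>+x\<in>B. U k x \<partial>M)"
proof -
  have sets_F: "sets (F n) \<subseteq> sets M" and space_F: "space (F n) = space M" for n
    using sub[of n] by (auto simp: subalgebra_def)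
  have [measurable]: "U n \<in> borel_measurable M" for n
    using adapted sub measurable_from_subalg by blast
  have level_F: "{x\<in>space M. P (U n x)} \<in> sets (F n)" if [measurable]: "Measurable.pred borel P" for n P
  proof -
    have [measurable]: "U n \<in> borel_measurable (F n)" by (rule adapted)
    have "{x\<in>space (F n). P (U n x)} \<in> sets (F n)" by measurable
    then show ?thesis by (simp add: space_F)
  qed
  show ?thesis
    using \<open>N \<le> k\<close> \<open>B \<in> sets (F k)\<close>
  proof (induction d arbitrary: k B)
    case 0
    have [measurable]: "B \<in> sets M"
      using "0.prems" sets_F by auto
    have "B \<inter> {x\<in>space M. \<exists>j\<in>{k..k+0}. c \<le> U j x} \<in> sets M"
      by measurable
    then have "ennreal c * emeasure M (B \<inter> {x\<in>space M. \<exists>j\<in>{k..k+0}. c \<le> U j x})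
        \<le> (\<integral>\<^sup>+x\<in>B \<inter> {x\<in>space M. \<exists>j\<in>{k..k+0}. c \<le> U j x}. U k x \<partial>M)"
      by (rule cmult_emeasure_le_set_nn_integral) auto
    also have "\<dots> \<le> (\<integral>\<^sup>+x\<in>B. U k x \<partial>M)"
      by (intro nn_integral_mono) (auto simp: indicator_def)
    finally show ?case .
  next
    case (Suc d k B)
    \<comment> \<open>Split off the part of \<open>B\<close> where \<open>U k\<close> already reaches \<open>c\<close>; the rest is
      \<open>F k\<close>-measurable, so the induction hypothesis at \<open>k + 1\<close> and one supermartingale
      step back to \<open>k\<close> apply to it.\<close>
    define S where "S = B \<inter> {x\<in>space M. c \<le> U k x}"
    define B' where "B' = B \<inter> {x\<in>space M. U k x < c}"
    have S_F: "S \<in> sets (F k)" and B'_F: "B' \<in> sets (F k)"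
      unfolding S_def B'_def using Suc.prems level_F by auto
    have [measurable]: "S \<in> sets M" "B' \<in> sets M" "B \<in> sets M"
      using S_F B'_F Suc.prems sets_F by auto
    have B'_F': "B' \<in> sets (F (Suc k))"
      using B'_F mono[of k "Suc k"] by auto
    let ?E = "\<lambda>k d. {x\<in>space M. \<exists>j\<in>{k..k+d}. c \<le> U j x}"
    have [measurable]: "?E k d \<in> sets M" for k d by measurable
    have "{k..k + Suc d} = insert k {Suc k..Suc k + d}" by auto
    then have split: "B \<inter> ?E k (Suc d) = S \<union> (B' \<inter> ?E (Suc k) d)"
      unfolding S_def B'_def by (auto simp: not_le)
    have "ennreal c * emeasure M (B \<inter> ?E k (Suc d))
        = ennreal c * emeasure M S + ennreal c * emeasure M (B' \<inter> ?E (Suc k) d)"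
      unfolding split by (subst plus_emeasure[symmetric]) (auto simp: S_def B'_def distrib_left)
    also have "\<dots> \<le> (\<integral>\<^sup>+x\<in>S. U k x \<partial>M) + (\<integral>\<^sup>+x\<in>B'. U (Suc k) x \<partial>M)"
      using Suc.IH[OF _ B'_F'] Suc.prems
      by (intro add_mono cmult_emeasure_le_set_nn_integral) (auto simp: S_def)
    also have "\<dots> \<le> (\<integral>\<^sup>+x\<in>S. U k x \<partial>M) + (\<integral>\<^sup>+x\<in>B'. U k x \<partial>M)"
      using super[OF Suc.prems(1) B'_F] by (rule add_left_mono)
    also have "\<dots> = (\<integral>\<^sup>+x\<in>S \<union> B'. U k x \<partial>M)"
      by (rule nn_integral_disjoint_pair[symmetric]) (auto simp: S_def B'_def)
    also have "S \<union> B' = B"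
      using sets.sets_into_space[OF \<open>B \<in> sets M\<close>] by (auto simp: S_def B'_def)
    finally show ?case .
  qed
qed

lemma set_supermartingale_maximal_ineq:
  fixes U :: "nat \<Rightarrow> 'a \<Rightarrow> real"
  assumes sub: "\<And>n. subalgebra M (F n)"
    and mono: "\<And>n m. n \<le> m \<Longrightarrow> sets (F n) \<subseteq> sets (F m)"
    and adapted: "\<And>n. U n \<in> borel_measurable (F n)"
    and super: "\<And>n B. N \<le> n \<Longrightarrow> B \<in> sets (F n) \<Longrightarrow>
      (\<integral>\<^sup>+x\<in>B. U (Suc n) x \<partial>M) \<le> (\<integral>\<^sup>+x\<in>B. U n x \<partial>M)"
    and "N \<le> k" and B: "B \<in> sets (F k)"
  shows "ennreal c * emeasure M (B \<inter> {x\<in>space M. \<exists>j\<ge>k. c \<le> U j x}) \<le> (\<integral>\<^sup>+x\<in>B. U k x \<partial>M)"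
proof -
  have [measurable]: "U n \<in> borel_measurable M" for n
    using adapted sub measurable_from_subalg by blast
  have [measurable]: "B \<in> sets M"
    using B sub[of k] by (auto simp: subalgebra_def)
  define A where "A d = B \<inter> {x\<in>space M. \<exists>j\<in>{k..k+d}. c \<le> U j x}" for d
  have "A d \<in> sets M" for d
    unfolding A_def by measurable
  then have "range A \<subseteq> sets M" by auto
  moreover have "incseq A"
    unfolding incseq_def A_def by force
  moreover have "(\<Union>d. A d) = B \<inter> {x\<in>space M. \<exists>j\<ge>k. c \<le> U j x}"
  proof (intro equalityI subsetI)
    fix x
    assume "x \<in> B \<inter> {x\<in>space M. \<exists>j\<ge>k. c \<le> U j x}"
    then obtain j where "k \<le> j" "c \<le> U j x" "x \<in> B" "x \<in> space M" by auto
    then have "x \<in> A (j - k)" unfolding A_def by auto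
    then show "x \<in> (\<Union>d. A d)" by blast
  qed (auto simp: A_def)
  ultimately have "ennreal c * emeasure M (B \<inter> {x\<in>space M. \<exists>j\<ge>k. c \<le> U j x})
      = (SUP d. ennreal c * emeasure M (A d))"
    by (metis SUP_emeasure_incseq SUP_mult_left_ennreal)
  also have "\<dots> \<le> (\<integral>\<^sup>+x\<in>B. U k x \<partial>M)"
    unfolding A_def using set_supermartingale_maximal_ineq_finite[OF assms]
    by (intro SUP_least) blast
  finally show ?thesis .
qed

section \<open>Almost-sure convergence of contracting processes\<close>

lemma (in finite_measure) sigma_finite_subalgebraI:
  assumes "subalgebra M G"
  shows "sigma_finite_subalgebra M G"
  using assms finite_measure_axioms
  by (intro finite_measure_subalgebra_is_sigma_finite finite_measure_subalgebra.intro
      finite_measure_subalgebra_axioms.intro)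

lemma (in sigma_finite_subalgebra) set_nn_integral_le_of_nn_cond_exp_le:
  assumes "AE x in M. nn_cond_exp M F g x \<le> h x"
    and [measurable]: "g \<in> borel_measurable M" "B \<in> sets F"
  shows "(\<integral>\<^sup>+x\<in>B. g x \<partial>M) \<le> (\<integral>\<^sup>+x\<in>B. h x \<partial>M)"
proof -
  have "(\<integral>\<^sup>+x\<in>B. g x \<partial>M) = (\<integral>\<^sup>+x. indicator B x * nn_cond_exp M F g x \<partial>M)"
    by (simp add: nn_cond_exp_intg mult.commute)
  also have "\<dots> \<le> (\<integral>\<^sup>+x\<in>B. h x \<partial>M)"
    using assms(1) by (intro nn_integral_mono_AE) (auto simp: indicator_def)
  finally show ?thesis .
qed

lemma set_nn_integral_contraction_tendsto_zero:
  fixes W :: "nat \<Rightarrow> 'a \<Rightarrow> real" and f T :: "nat \<Rightarrow> real"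
  assumes "prob_space M"
    and [measurable]: "\<And>n. W n \<in> borel_measurable M" "B \<in> sets M"
    and W_nonneg: "\<And>n x. 0 \<le> W n x" and W_bounded: "\<And>x. x \<in> B \<Longrightarrow> W N x \<le> L"
    and drift: "\<And>n. N \<le> n \<Longrightarrow>
      (\<integral>\<^sup>+x\<in>B. W (Suc n) x \<partial>M) \<le> (\<integral>\<^sup>+x\<in>B. exp (- \<epsilon> * T n) * W n x + f n \<partial>M)"
    and f_nonneg: "\<And>n. 0 \<le> f n" and "summable f"
    and "\<And>n. 0 \<le> T n" and "\<not> summable T" and "\<epsilon> > 0"
  shows "(\<lambda>n. \<integral>\<^sup>+x\<in>B. W n x \<partial>M) \<longlonglongrightarrow> 0"
proof (rule ennreal_contraction_recursion_tendsto_zero)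
  interpret prob_space M by fact
  fix n
  assume "N \<le> n"
  have "(\<integral>\<^sup>+x\<in>B. W (Suc n) x \<partial>M)
      \<le> (\<integral>\<^sup>+x\<in>B. ennreal (exp (- \<epsilon> * T n)) * ennreal (W n x) + ennreal (f n) \<partial>M)"
    using drift[OF \<open>N \<le> n\<close>] W_nonneg f_nonneg by (simp add: ennreal_mult')
  also have "\<dots> = ennreal (exp (- \<epsilon> * T n)) * (\<integral>\<^sup>+x\<in>B. W n x \<partial>M) + ennreal (f n) * emeasure M B"
    by (simp add: nn_set_integral_add nn_integral_cmult nn_integral_cmult_indicator mult.assoc)
  also have "\<dots> \<le> ennreal (exp (- \<epsilon> * T n)) * (\<integral>\<^sup>+x\<in>B. W n x \<partial>M) + ennreal (f n)"
    using mult_left_mono[OF emeasure_le_1] by (intro add_left_mono) fastforce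
  finally show "(\<integral>\<^sup>+x\<in>B. W (Suc n) x \<partial>M)
      \<le> ennreal (exp (- \<epsilon> * T n)) * (\<integral>\<^sup>+x\<in>B. W n x \<partial>M) + ennreal (f n)" .
next
  interpret prob_space M by fact
  have "(\<integral>\<^sup>+x\<in>B. W N x \<partial>M) \<le> (\<integral>\<^sup>+x. ennreal L * indicator B x \<partial>M)"
    using W_bounded by (intro nn_integral_mono) (auto simp: indicator_def ennreal_leI)
  also have "\<dots> = ennreal L * emeasure M B" by (rule nn_integral_cmult_indicator) fact
  also have "\<dots> < \<infinity>"
    by (simp add: less_top[symmetric] ennreal_mult_eq_top_iff)
  finally show "(\<integral>\<^sup>+x\<in>B. W N x \<partial>M) < \<infinity>" .
qed fact+

lemma AE_LIMSEQ_zeroI: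
  fixes W :: "nat \<Rightarrow> 'a \<Rightarrow> real"
  assumes W_nonneg: "\<And>n x. 0 \<le> W n x"
    and small: "\<And>i::nat. AE x in M. eventually (\<lambda>n. W n x < 1 / Suc i) sequentially"
  shows "AE x in M. (\<lambda>n. W n x) \<longlonglongrightarrow> 0"
proof -
  have "AE x in M. \<forall>i::nat. eventually (\<lambda>n. W n x < 1 / Suc i) sequentially"
    using small by (simp add: AE_all_countable)
  then show ?thesis
  proof (rule eventually_mono)
    fix x
    assume small_x: "\<forall>i::nat. eventually (\<lambda>n. W n x < 1 / Suc i) sequentially"
    show "(\<lambda>n. W n x) \<longlonglongrightarrow> 0"
    proof (rule order_tendstoI)
      fix r :: real
      assume "r < 0"
      then show "eventually (\<lambda>n. r < W n x) sequentially"
        using W_nonneg by (intro always_eventually allI) (meson less_le_trans)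
    next
      fix r :: real
      assume "0 < r"
      then obtain i where "inverse (real (Suc i)) < r" using reals_Archimedean by blast
      then have "1 / Suc i < r" by (simp add: inverse_eq_divide)
      show "eventually (\<lambda>n. W n x < r) sequentially"
        by (rule eventually_mono[OF small_x[rule_format, of i]]) (use \<open>1 / Suc i < r\<close> in linarith)
    qed
  qed
qed

lemma set_nn_integral_plus_tail_decreasing:
  fixes W :: "nat \<Rightarrow> 'a \<Rightarrow> real" and f T :: "nat \<Rightarrow> real"
  assumes [measurable]: "W n \<in> borel_measurable M" "W (Suc n) \<in> borel_measurable M" "B \<in> sets M"
    and W_nonneg: "\<And>m x. 0 \<le> W m x"
    and drift: "(\<integral>\<^sup>+x\<in>B. W (Suc n) x \<partial>M) \<le> (\<integral>\<^sup>+x\<in>B. exp (- \<epsilon> * T n) * W n x + f n \<partial>M)"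
    and f_nonneg: "\<And>m. 0 \<le> f m" and f_summable: "summable f" and "0 \<le> \<epsilon>" "0 \<le> T n"
  shows "(\<integral>\<^sup>+x\<in>B. W (Suc n) x + (\<Sum>j. f (j + Suc n)) \<partial>M) \<le> (\<integral>\<^sup>+x\<in>B. W n x + (\<Sum>j. f (j + n)) \<partial>M)"
proof -
  define t where "t m = (\<Sum>j. f (j + m))" for m
  have t_nonneg: "0 \<le> t m" for m
    unfolding t_def using f_summable f_nonneg by (simp add: summable_iff_shift suminf_nonneg)
  have "t n = f n + t (Suc n)"
    using suminf_split_head[of "\<lambda>j. f (j + n)"] f_summable by (simp add: t_def summable_iff_shift)
  moreover have "exp (- \<epsilon> * T n) * W n x \<le> W n x" for x
    using W_nonneg[of n x] \<open>0 \<le> \<epsilon>\<close> \<open>0 \<le> T n\<close> by (simp add: mult_left_le_one_le)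
  ultimately have step: "exp (- \<epsilon> * T n) * W n x + f n + t (Suc n) \<le> W n x + t n" for x
    by (metis add_le_cancel_right add.assoc)
  have "(\<integral>\<^sup>+x\<in>B. W (Suc n) x + t (Suc n) \<partial>M) = (\<integral>\<^sup>+x\<in>B. W (Suc n) x \<partial>M) + (\<integral>\<^sup>+x\<in>B. t (Suc n) \<partial>M)"
    using W_nonneg t_nonneg by (simp add: nn_set_integral_add[symmetric])
  also have "\<dots> \<le> (\<integral>\<^sup>+x\<in>B. exp (- \<epsilon> * T n) * W n x + f n \<partial>M) + (\<integral>\<^sup>+x\<in>B. t (Suc n) \<partial>M)"
    using drift by (rule add_right_mono)
  also have "\<dots> = (\<integral>\<^sup>+x\<in>B. exp (- \<epsilon> * T n) * W n x + f n + t (Suc n) \<partial>M)"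
    using W_nonneg f_nonneg t_nonneg by (simp add: nn_set_integral_add[symmetric])
  also have "\<dots> \<le> (\<integral>\<^sup>+x\<in>B. W n x + t n \<partial>M)"
    using step by (intro nn_integral_mono) (auto simp: indicator_def ennreal_leI)
  finally show ?thesis by (simp add: t_def)
qed

lemma set_contraction_maximal_ineq:
  fixes W :: "nat \<Rightarrow> 'a \<Rightarrow> real" and f T :: "nat \<Rightarrow> real"
  assumes "prob_space M"
    and sub: "\<And>n. subalgebra M (F n)"
    and mono: "\<And>n m. n \<le> m \<Longrightarrow> sets (F n) \<subseteq> sets (F m)"
    and adapted: "\<And>n. W n \<in> borel_measurable (F n)"
    and W_nonneg: "\<And>n x. 0 \<le> W n x"
    and set_drift: "\<And>n B. N \<le> n \<Longrightarrow> B \<in> sets (F n) \<Longrightarrow>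
      (\<integral>\<^sup>+x\<in>B. W (Suc n) x \<partial>M) \<le> (\<integral>\<^sup>+x\<in>B. exp (- \<epsilon> * T n) * W n x + f n \<partial>M)"
    and f_nonneg: "\<And>n. 0 \<le> f n" and f_summable: "summable f"
    and T_nonneg: "\<And>n. 0 \<le> T n" and "\<epsilon> > 0"
    and "N \<le> k" and B_F: "B \<in> sets (F k)"
  shows "ennreal c * emeasure M (B \<inter> {x\<in>space M. \<exists>j\<ge>k. c \<le> W j x})
    \<le> (\<integral>\<^sup>+x\<in>B. W k x \<partial>M) + ennreal (\<Sum>j. f (j + k))"
proof -
  interpret prob_space M by fact
  have sets_F: "sets (F n) \<subseteq> sets M" for n
    using sub[of n] by (auto simp: subalgebra_def)
  have W_M [measurable]: "W n \<in> borel_measurable M" for n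
    using adapted sub measurable_from_subalg by blast
  have [measurable]: "B \<in> sets M" using B_F sets_F by auto
  have t_nonneg: "0 \<le> (\<Sum>j. f (j + n))" for n
    using f_summable f_nonneg by (simp add: summable_iff_shift suminf_nonneg)
  define U where "U n x = W n x + (\<Sum>j. f (j + n))" for n x
  have "U n \<in> borel_measurable (F n)" for n
    using adapted[of n] unfolding U_def by measurable
  moreover have "(\<integral>\<^sup>+x\<in>A. U (Suc n) x \<partial>M) \<le> (\<integral>\<^sup>+x\<in>A. U n x \<partial>M)"
    if "N \<le> n" and "A \<in> sets (F n)" for n A
    unfolding U_def using that sets_F W_M W_nonneg set_drift f_nonneg f_summable T_nonneg \<open>\<epsilon> > 0\<close>
    by (intro set_nn_integral_plus_tail_decreasing[where \<epsilon> = \<epsilon> and T = T]) auto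
  ultimately have maximal: "ennreal c * emeasure M (B \<inter> {x\<in>space M. \<exists>j\<ge>k. c \<le> U j x})
      \<le> (\<integral>\<^sup>+x\<in>B. U k x \<partial>M)"
    using sub mono \<open>N \<le> k\<close> B_F by (intro set_supermartingale_maximal_ineq) auto
  have "c \<le> U j x" if "c \<le> W j x" for j x
    using that t_nonneg[of j] by (simp add: U_def)
  then have "ennreal c * emeasure M (B \<inter> {x\<in>space M. \<exists>j\<ge>k. c \<le> W j x})
      \<le> ennreal c * emeasure M (B \<inter> {x\<in>space M. \<exists>j\<ge>k. c \<le> U j x})"
    by (intro mult_left_mono emeasure_mono) (auto simp: U_def)
  also have "\<dots> \<le> (\<integral>\<^sup>+x\<in>B. W k x \<partial>M) + ennreal (\<Sum>j. f (j + k)) * emeasure M B"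
    using maximal W_nonneg t_nonneg by (simp add: U_def nn_set_integral_add nn_integral_cmult_indicator)
  also have "\<dots> \<le> (\<integral>\<^sup>+x\<in>B. W k x \<partial>M) + ennreal (\<Sum>j. f (j + k))"
    using mult_left_mono[OF emeasure_le_1] by (intro add_left_mono) fastforce
  finally show ?thesis .
qed

lemma AE_eventually_less_of_set_contraction:
  fixes W :: "nat \<Rightarrow> 'a \<Rightarrow> real" and f T :: "nat \<Rightarrow> real" and L c :: real
  assumes "prob_space M"
    and sub: "\<And>n. subalgebra M (F n)"
    and mono: "\<And>n m. n \<le> m \<Longrightarrow> sets (F n) \<subseteq> sets (F m)"
    and adapted: "\<And>n. W n \<in> borel_measurable (F n)"
    and W_nonneg: "\<And>n x. 0 \<le> W n x"
    and set_drift: "\<And>n B. N \<le> n \<Longrightarrow> B \<in> sets (F n) \<Longrightarrow>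
      (\<integral>\<^sup>+x\<in>B. W (Suc n) x \<partial>M) \<le> (\<integral>\<^sup>+x\<in>B. exp (- \<epsilon> * T n) * W n x + f n \<partial>M)"
    and f_nonneg: "\<And>n. 0 \<le> f n" and f_summable: "summable f"
    and T_nonneg: "\<And>n. 0 \<le> T n" and T_not_summable: "\<not> summable T" and "\<epsilon> > 0"
    and "c > 0"
  shows "AE x in M. W N x \<le> L \<longrightarrow> eventually (\<lambda>n. W n x < c) sequentially"
proof -
  have sets_F: "sets (F n) \<subseteq> sets M" and space_F: "space (F n) = space M" for n
    using sub[of n] by (auto simp: subalgebra_def)
  have [measurable]: "W n \<in> borel_measurable M" for n
    using adapted sub measurable_from_subalg by blast
  \<comment> \<open>On a level set of \<open>W N\<close> the integrals of \<open>W\<close> are finite.\<close>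
  define B where "B = {x\<in>space M. W N x \<le> L}"
  define E where "E = {x\<in>space M. \<forall>n. \<exists>j\<ge>n. c \<le> W j x}"
  have "{x\<in>space (F N). W N x \<le> L} \<in> sets (F N)"
    using adapted[of N] by measurable
  then have B_F: "B \<in> sets (F n)" if "N \<le> n" for n
    using mono[OF that] by (auto simp: B_def space_F)
  have [measurable]: "B \<in> sets M" "E \<in> sets M"
    using B_F[of N] sets_F unfolding E_def by auto
  have maximal: "ennreal c * emeasure M (B \<inter> E) \<le> (\<integral>\<^sup>+x\<in>B. W n x \<partial>M) + ennreal (\<Sum>j. f (j + n))"
    if "N \<le> n" for n
  proof -
    have "ennreal c * emeasure M (B \<inter> E) \<le> ennreal c * emeasure M (B \<inter> {x\<in>space M. \<exists>j\<ge>n. c \<le> W j x})"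
      by (intro mult_left_mono emeasure_mono) (auto simp: E_def)
    also have "\<dots> \<le> (\<integral>\<^sup>+x\<in>B. W n x \<partial>M) + ennreal (\<Sum>j. f (j + n))"
      using assms(1) sub mono adapted W_nonneg set_drift f_nonneg f_summable T_nonneg \<open>\<epsilon> > 0\<close> that B_F[OF that]
      by (rule set_contraction_maximal_ineq)
    finally show ?thesis .
  qed
  have "(\<lambda>n. \<integral>\<^sup>+x\<in>B. W n x \<partial>M) \<longlonglongrightarrow> 0"
    using assms(1) W_nonneg set_drift B_F f_nonneg f_summable T_nonneg T_not_summable \<open>\<epsilon> > 0\<close>
    by (intro set_nn_integral_contraction_tendsto_zero[where N = N and L = L]) (auto simp: B_def)
  moreover have "(\<lambda>n. ennreal (\<Sum>j. f (j + n))) \<longlonglongrightarrow> 0"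
    using suminf_exist_split2[OF f_summable] tendsto_ennrealI by fastforce
  ultimately have "(\<lambda>n. (\<integral>\<^sup>+x\<in>B. W n x \<partial>M) + ennreal (\<Sum>j. f (j + n))) \<longlonglongrightarrow> 0 + 0"
    by (rule tendsto_add)
  then have "ennreal c * emeasure M (B \<inter> E) \<le> 0"
    using maximal by (intro LIMSEQ_le_const[where x = 0]) (auto simp: eventually_sequentially)
  then have "B \<inter> E \<in> null_sets M"
    using \<open>c > 0\<close> by (intro null_setsI) auto
  then show ?thesis
    by (rule AE_I') (auto simp: B_def E_def eventually_sequentially not_less)
qed

lemma AE_tendsto_zero_of_nn_cond_exp_contraction:
  fixes W :: "nat \<Rightarrow> 'a \<Rightarrow> real" and f T :: "nat \<Rightarrow> real"
  assumes "prob_space M"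
    and sub: "\<And>n. subalgebra M (F n)"
    and mono: "\<And>n m. n \<le> m \<Longrightarrow> sets (F n) \<subseteq> sets (F m)"
    and adapted: "\<And>n. W n \<in> borel_measurable (F n)"
    and W_nonneg: "\<And>n x. 0 \<le> W n x"
    and drift: "\<And>n. N \<le> n \<Longrightarrow> AE x in M.
      nn_cond_exp M (F n) (\<lambda>x. ennreal (W (Suc n) x)) x \<le> ennreal (exp (- \<epsilon> * T n) * W n x + f n)"
    and "\<And>n. 0 \<le> f n" and "summable f"
    and "\<And>n. 0 \<le> T n" and "\<not> summable T" and "\<epsilon> > 0"
  shows "AE x in M. (\<lambda>n. W n x) \<longlonglongrightarrow> 0"
proof -
  interpret prob_space M by fact
  have set_drift: "(\<integral>\<^sup>+x\<in>B. W (Suc n) x \<partial>M) \<le> (\<integral>\<^sup>+x\<in>B. exp (- \<epsilon> * T n) * W n x + f n \<partial>M)"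
    if "N \<le> n" "B \<in> sets (F n)" for n B
  proof -
    interpret sigma_finite_subalgebra M "F n"
      using sub by (rule sigma_finite_subalgebraI)
    have "W (Suc n) \<in> borel_measurable M"
      using adapted sub measurable_from_subalg by blast
    then show ?thesis
      using drift[OF that(1)] that(2) by (intro set_nn_integral_le_of_nn_cond_exp_le) auto
  qed
  show ?thesis
  proof (rule AE_LIMSEQ_zeroI[OF W_nonneg])
    fix i :: nat
    have "AE x in M. \<forall>L::nat. W N x \<le> real L \<longrightarrow> eventually (\<lambda>n. W n x < 1 / Suc i) sequentially"
      by (subst AE_all_countable)
        (intro allI AE_eventually_less_of_set_contraction[OF assms(1-5) set_drift assms(7-11)] divide_pos_pos,
          simp_all)
    then show "AE x in M. eventually (\<lambda>n. W n x < 1 / Suc i) sequentially"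
      by (rule eventually_mono) (meson real_arch_simple)
  qed
qed

section \<open>One-step estimates for the weighted excess\<close>

lemma max_zero_square_le:
  fixes u v :: real
  shows "(max 0 u)\<^sup>2 \<le> (max 0 v)\<^sup>2 + 2 * max 0 v * (u - v) + (u - v)\<^sup>2"
proof (cases "v \<ge> 0")
  case True
  then have "(max 0 v)\<^sup>2 + 2 * max 0 v * (u - v) + (u - v)\<^sup>2 = u\<^sup>2"
    by (simp add: power2_eq_square algebra_simps)
  moreover have "(max 0 u)\<^sup>2 \<le> u\<^sup>2" by (cases "u \<ge> 0") auto
  ultimately show ?thesis by simp
next
  case False
  then have "(max 0 u)\<^sup>2 \<le> (u - v)\<^sup>2"
    by (cases "u \<ge> 0") (auto intro: power_mono)
  with False show ?thesis by simp
qed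

lemma max_zero_square_step_le:
  fixes x y r c :: real
  assumes "\<bar>y - x\<bar> \<le> r"
  shows "(max 0 (y - c))\<^sup>2 + 2 * max 0 (x - c) * x \<le> (max 0 (x - c))\<^sup>2 + r\<^sup>2 + 2 * max 0 (x - c) * y"
proof -
  have "(y - x)\<^sup>2 \<le> r\<^sup>2"
    using assms by (metis abs_ge_zero abs_le_square_iff abs_of_nonneg order_trans power2_abs)
  then show ?thesis
    using max_zero_square_le[of "y - c" "x - c"] by (simp add: algebra_simps)
qed

lemma excess_square_drift_bound:
  fixes z \<alpha> \<xi> t B :: real
  defines "p \<equiv> max 0 (z - \<xi> / \<alpha>)"
  assumes "0 \<le> z" and "0 < \<alpha>"
  shows "p\<^sup>2 + (B * t * (z + 1))\<^sup>2 + 2 * p * ((1 - \<alpha> * t) * z + \<xi> * t)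
    \<le> 2 * p * z + ((1 - 2 * \<alpha> * t + 2 * B\<^sup>2 * t\<^sup>2) * p\<^sup>2 + 2 * B\<^sup>2 * (\<xi> / \<alpha> + 1)\<^sup>2 * t\<^sup>2)"
proof -
  define c where "c = \<xi> / \<alpha>"
  have excess: "p * (z - c) = p\<^sup>2"
    by (cases "z \<ge> c") (auto simp: p_def c_def power2_eq_square)
  have "2 * p * ((1 - \<alpha> * t) * z + \<xi> * t) = 2 * p * z - 2 * \<alpha> * t * (p * (z - c))"
    using \<open>0 < \<alpha>\<close> by (simp add: c_def algebra_simps)
  then have drift: "2 * p * ((1 - \<alpha> * t) * z + \<xi> * t) = 2 * p * z - 2 * \<alpha> * t * p\<^sup>2"
    by (simp only: excess)
  have "z + 1 \<le> p + (c + 1)" by (simp add: p_def c_def)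
  then have "(z + 1)\<^sup>2 \<le> (p + (c + 1))\<^sup>2"
    using \<open>0 \<le> z\<close> by (intro power_mono) auto
  also have "\<dots> \<le> 2 * p\<^sup>2 + 2 * (c + 1)\<^sup>2"
    using zero_le_power2[of "p - (c + 1)"] by (simp add: power2_eq_square algebra_simps)
  finally have "(B * t * (z + 1))\<^sup>2 \<le> B\<^sup>2 * t\<^sup>2 * (2 * p\<^sup>2 + 2 * (c + 1)\<^sup>2)"
    unfolding power_mult_distrib by (intro mult_left_mono) auto
  then show ?thesis
    unfolding drift c_def by (simp add: algebra_simps)
qed

lemma contraction_factor_nonneg:
  fixes \<alpha> B t :: real
  assumes "0 < \<alpha>" "\<alpha> \<le> B"
  shows "0 \<le> 1 - 2 * \<alpha> * t + 2 * B\<^sup>2 * t\<^sup>2"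
proof -
  have "\<alpha>\<^sup>2 * t\<^sup>2 \<le> B\<^sup>2 * t\<^sup>2"
    using assms by (intro mult_right_mono power_mono) auto
  moreover have "1 - 2 * \<alpha> * t + 2 * \<alpha>\<^sup>2 * t\<^sup>2 = (1 - \<alpha> * t)\<^sup>2 + \<alpha>\<^sup>2 * t\<^sup>2"
    by (simp add: power2_eq_square algebra_simps)
  moreover have "0 \<le> \<alpha>\<^sup>2 * t\<^sup>2" by simp
  ultimately show ?thesis
    using zero_le_power2[of "1 - \<alpha> * t"] by linarith
qed

lemma weight_growth_le_exp:
  fixes n :: nat and \<alpha> B \<eta> l t :: real
  assumes "0 < \<eta>" and "0 < \<alpha>" and "\<alpha> \<le> B" and "0 < l" and "l < real n * t"
    and small: "2 * B\<^sup>2 * t \<le> \<alpha> - \<eta> / (2 * l)"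
  shows "(real n + 2) powr \<eta> * (1 - 2 * \<alpha> * t + 2 * B\<^sup>2 * t\<^sup>2)
    \<le> (real n + 1) powr \<eta> * exp (- (\<alpha> - \<eta> / (2 * l)) * t)"
proof -
  have "0 < real n * t"
    using \<open>0 < l\<close> \<open>l < real n * t\<close> by linarith
  then have "0 < real n" "0 < t"
    by (auto simp: zero_less_mult_iff)
  have "ln ((real n + 2) / (real n + 1)) = ln (1 + 1 / (real n + 1))"
    by (simp add: field_simps)
  also have "\<dots> \<le> 1 / (real n + 1)" by (rule ln_add_one_self_le_self) simp
  finally have "\<eta> * ln ((real n + 2) / (real n + 1)) \<le> \<eta> / (real n + 1)"
    using \<open>0 < \<eta>\<close> by (simp add: mult_left_mono divide_inverse)
  also have "\<dots> \<le> \<eta> / real n"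
    using \<open>0 < real n\<close> \<open>0 < \<eta>\<close> by (intro divide_left_mono) auto
  also have "\<dots> \<le> \<eta> * t / l"
    using \<open>0 < real n\<close> \<open>0 < l\<close> \<open>0 < \<eta>\<close> \<open>l < real n * t\<close> by (simp add: field_simps)
  finally have ratio: "((real n + 2) / (real n + 1)) powr \<eta> \<le> exp (\<eta> * t / l)"
    by (simp add: powr_def)
  have factor: "1 - 2 * \<alpha> * t + 2 * B\<^sup>2 * t\<^sup>2 \<le> exp (- 2 * \<alpha> * t + 2 * B\<^sup>2 * t\<^sup>2)"
    using exp_ge_add_one_self[of "- 2 * \<alpha> * t + 2 * B\<^sup>2 * t\<^sup>2"] by linarith
  have "(real n + 2) powr \<eta> * (1 - 2 * \<alpha> * t + 2 * B\<^sup>2 * t\<^sup>2)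
      = (real n + 1) powr \<eta> * (((real n + 2) / (real n + 1)) powr \<eta> * (1 - 2 * \<alpha> * t + 2 * B\<^sup>2 * t\<^sup>2))"
    by (simp add: powr_divide)
  also have "\<dots> \<le> (real n + 1) powr \<eta> * (exp (\<eta> * t / l) * exp (- 2 * \<alpha> * t + 2 * B\<^sup>2 * t\<^sup>2))"
    using ratio factor contraction_factor_nonneg[OF \<open>0 < \<alpha>\<close> \<open>\<alpha> \<le> B\<close>, of t]
    by (intro mult_left_mono mult_mono) auto
  also have "\<dots> \<le> (real n + 1) powr \<eta> * exp (- (\<alpha> - \<eta> / (2 * l)) * t)"
  proof -
    have "2 * B\<^sup>2 * t\<^sup>2 \<le> (\<alpha> - \<eta> / (2 * l)) * t"
      using mult_right_mono[OF small, of t] \<open>0 < t\<close> by (simp add: power2_eq_square)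
    then have "\<eta> * t / l + (- 2 * \<alpha> * t + 2 * B\<^sup>2 * t\<^sup>2) \<le> - (\<alpha> - \<eta> / (2 * l)) * t"
      by (simp add: field_simps)
    then show ?thesis by (simp add: exp_add[symmetric])
  qed
  finally show ?thesis .
qed

lemma infdist_atLeastAtMost:
  fixes z c :: real
  assumes "0 \<le> z" "0 \<le> c"
  shows "infdist z {0..c} = max 0 (z - c)"
proof (cases "z \<le> c")
  case True
  then show ?thesis using assms by simp
next
  case False
  obtain y where y: "y \<in> {0..c}" "infdist z {0..c} = dist z y"
    using infdist_attains_inf[of "{0..c}" z] assms by auto
  have "infdist z {0..c} \<le> dist z c"
    using assms by (intro infdist_le) auto
  with y False show ?thesis by (simp add: dist_real_def)
qed

lemma (in sigma_finite_subalgebra) nn_cond_exp_add_le_affine: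
  assumes le: "AE x in M. X x + g x \<le> a x + b x * Y x"
    and [measurable]: "X \<in> borel_measurable M" "Y \<in> borel_measurable M"
      "g \<in> borel_measurable F" "a \<in> borel_measurable F" "b \<in> borel_measurable F"
  shows "AE x in M. nn_cond_exp M F X x + g x \<le> a x + b x * nn_cond_exp M F Y x"
proof -
  have [measurable]: "g \<in> borel_measurable M" "a \<in> borel_measurable M" "b \<in> borel_measurable M"
    by (auto intro: measurable_from_subalg[OF subalg])
  have "AE x in M. nn_cond_exp M F (\<lambda>x. X x + g x) x \<le> nn_cond_exp M F (\<lambda>x. a x + b x * Y x) x"
    using le by (rule nn_cond_exp_mono) measurable
  moreover have "AE x in M. nn_cond_exp M F X x + nn_cond_exp M F g x = nn_cond_exp M F (\<lambda>x. X x + g x) x"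
    by (rule nn_cond_exp_sum) measurable
  moreover have "AE x in M. nn_cond_exp M F a x + nn_cond_exp M F (\<lambda>x. b x * Y x) x
      = nn_cond_exp M F (\<lambda>x. a x + b x * Y x) x"
    by (rule nn_cond_exp_sum) measurable
  moreover have "AE x in M. b x * nn_cond_exp M F Y x = nn_cond_exp M F (\<lambda>x. b x * Y x) x"
    by (rule nn_cond_exp_prod) measurable
  moreover have "AE x in M. g x = nn_cond_exp M F g x" "AE x in M. a x = nn_cond_exp M F a x"
    by (rule nn_cond_exp_F_meas, measurable)+
  ultimately show ?thesis
    by eventually_elim (metis)
qed

lemma nn_cond_exp_excess_square_le:
  fixes za zb :: "'a \<Rightarrow> real" and \<alpha> \<xi> t B :: real
  assumes "sigma_finite_subalgebra M G"
    and [measurable]: "za \<in> borel_measurable G" "zb \<in> borel_measurable M"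
    and za_nonneg: "\<And>x. x \<in> space M \<Longrightarrow> 0 \<le> za x"
    and zb_nonneg: "\<And>x. x \<in> space M \<Longrightarrow> 0 \<le> zb x"
    and drift: "AE x in M. nn_cond_exp M G (\<lambda>x. ennreal (zb x)) x \<le> ennreal ((1 - \<alpha> * t) * za x + \<xi> * t)"
    and incr: "AE x in M. \<bar>zb x - za x\<bar> \<le> B * t * (za x + 1)"
    and "0 < \<alpha>" "0 \<le> \<xi>" "0 \<le> t" "\<alpha> * t \<le> 1" "\<alpha> \<le> B"
  shows "AE x in M. nn_cond_exp M G (\<lambda>x. ennreal ((max 0 (zb x - \<xi> / \<alpha>))\<^sup>2)) x
    \<le> ennreal ((1 - 2 * \<alpha> * t + 2 * B\<^sup>2 * t\<^sup>2) * (max 0 (za x - \<xi> / \<alpha>))\<^sup>2 + 2 * B\<^sup>2 * (\<xi> / \<alpha> + 1)\<^sup>2 * t\<^sup>2)"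
    (is "AE x in M. _ \<le> ennreal (?R x)")
proof -
  interpret sigma_finite_subalgebra M G by fact
  have [measurable]: "za \<in> borel_measurable M"
    by (rule measurable_from_subalg[OF subalg]) measurable
  define p where "p x = max 0 (za x - \<xi> / \<alpha>)" for x
  have p_nonneg: "0 \<le> p x" for x by (simp add: p_def)
  \<comment> \<open>\<open>nn_cond_exp\<close> is \<open>ennreal\<close>-valued, so the negative part \<open>- 2 p za\<close> of the
    expansion is moved to the left before conditioning and cancelled afterwards.\<close>
  have "AE x in M. ennreal ((max 0 (zb x - \<xi> / \<alpha>))\<^sup>2) + ennreal (2 * p x * za x)
      \<le> ennreal ((p x)\<^sup>2 + (B * t * (za x + 1))\<^sup>2) + ennreal (2 * p x) * ennreal (zb x)"
    using incr AE_space
  proof eventually_elim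
    case (elim x)
    then show ?case
      using max_zero_square_step_le[OF elim(1), of "\<xi> / \<alpha>"] p_nonneg[of x] za_nonneg zb_nonneg
      by (simp add: p_def ennreal_plus[symmetric] ennreal_mult[symmetric] del: ennreal_plus)
  qed
  then have "AE x in M. nn_cond_exp M G (\<lambda>x. ennreal ((max 0 (zb x - \<xi> / \<alpha>))\<^sup>2)) x + ennreal (2 * p x * za x)
      \<le> ennreal ((p x)\<^sup>2 + (B * t * (za x + 1))\<^sup>2) + ennreal (2 * p x) * nn_cond_exp M G (\<lambda>x. ennreal (zb x)) x"
    by (rule nn_cond_exp_add_le_affine) (auto simp: p_def)
  then show ?thesis
    using drift AE_space
  proof eventually_elim
    case (elim x)
    let ?m = "(1 - \<alpha> * t) * za x + \<xi> * t"
    have "0 \<le> ?m"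
      using za_nonneg[of x] elim \<open>\<alpha> * t \<le> 1\<close> \<open>0 \<le> \<xi>\<close> \<open>0 \<le> t\<close> by simp
    have "0 \<le> ?R x"
      using contraction_factor_nonneg[OF \<open>0 < \<alpha>\<close> \<open>\<alpha> \<le> B\<close>, of t] by simp
    have "nn_cond_exp M G (\<lambda>x. ennreal ((max 0 (zb x - \<xi> / \<alpha>))\<^sup>2)) x + ennreal (2 * p x * za x)
        \<le> ennreal ((p x)\<^sup>2 + (B * t * (za x + 1))\<^sup>2) + ennreal (2 * p x) * ennreal ?m"
      using elim(1) by (rule order_trans) (use elim(2) in \<open>intro add_left_mono mult_left_mono, auto\<close>)
    also have "\<dots> = ennreal ((p x)\<^sup>2 + (B * t * (za x + 1))\<^sup>2 + 2 * p x * ?m)"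
      using p_nonneg[of x] \<open>0 \<le> ?m\<close> by (simp add: ennreal_mult ennreal_plus)
    also have "\<dots> \<le> ennreal (2 * p x * za x + ?R x)"
      using excess_square_drift_bound[of "za x" \<alpha> \<xi> B t] za_nonneg[of x] elim \<open>0 < \<alpha>\<close>
      by (intro ennreal_leI) (simp add: p_def)
    also have "\<dots> = ennreal (2 * p x * za x) + ennreal (?R x)"
      using p_nonneg[of x] za_nonneg[of x] elim \<open>0 \<le> ?R x\<close> by (simp add: ennreal_plus)
    finally show ?case
      by (subst (asm) add.commute, subst (asm) add.commute[of "ennreal _"]) (simp add: ennreal_add_left_cancel_le)
  qed
qed

lemma nn_cond_exp_weighted_excess_square_le:
  fixes za zb :: "'a \<Rightarrow> real" and n :: nat and \<alpha> \<xi> t B \<eta> l :: real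
  assumes "sigma_finite_subalgebra M G"
    and "za \<in> borel_measurable G" "zb \<in> borel_measurable M"
    and "\<And>x. x \<in> space M \<Longrightarrow> 0 \<le> za x" "\<And>x. x \<in> space M \<Longrightarrow> 0 \<le> zb x"
    and "AE x in M. nn_cond_exp M G (\<lambda>x. ennreal (zb x)) x \<le> ennreal ((1 - \<alpha> * t) * za x + \<xi> * t)"
    and "AE x in M. \<bar>zb x - za x\<bar> \<le> B * t * (za x + 1)"
    and "0 < \<alpha>" "0 \<le> \<xi>" "\<alpha> * t \<le> 1" "\<alpha> \<le> B"
    and "0 < \<eta>" "0 < l" "l < real n * t" "2 * B\<^sup>2 * t \<le> \<alpha> - \<eta> / (2 * l)"
  shows "AE x in M. nn_cond_exp M G (\<lambda>x. ennreal ((real (Suc n) + 1) powr \<eta> * (max 0 (zb x - \<xi> / \<alpha>))\<^sup>2)) x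
    \<le> ennreal (exp (- (\<alpha> - \<eta> / (2 * l)) * t) * ((real n + 1) powr \<eta> * (max 0 (za x - \<xi> / \<alpha>))\<^sup>2)
        + (real n + 2) powr \<eta> * (2 * B\<^sup>2 * (\<xi> / \<alpha> + 1)\<^sup>2 * t\<^sup>2))"
proof -
  interpret sigma_finite_subalgebra M G by fact
  have "0 < real n * t"
    using \<open>0 < l\<close> \<open>l < real n * t\<close> by linarith
  then have "0 \<le> t" by (auto simp: zero_less_mult_iff)
  let ?w = "(real n + 2) powr \<eta>" and ?c = "1 - 2 * \<alpha> * t + 2 * B\<^sup>2 * t\<^sup>2"
    and ?K = "2 * B\<^sup>2 * (\<xi> / \<alpha> + 1)\<^sup>2 * t\<^sup>2" and ?e = "exp (- (\<alpha> - \<eta> / (2 * l)) * t)"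
  have weight: "?w * ?c \<le> (real n + 1) powr \<eta> * ?e"
    using assms by (intro weight_growth_le_exp) auto
  have weighted: "?w * (?c * p + ?K) \<le> ?e * ((real n + 1) powr \<eta> * p) + ?w * ?K" if "0 \<le> p" for p
  proof -
    have "?w * (?c * p + ?K) = (?w * ?c) * p + ?w * ?K"
      by (simp add: algebra_simps)
    also have "\<dots> \<le> ((real n + 1) powr \<eta> * ?e) * p + ?w * ?K"
      using weight \<open>0 \<le> p\<close> by (intro add_right_mono mult_right_mono)
    finally show ?thesis by (simp add: mult_ac)
  qed
  have [measurable]: "zb \<in> borel_measurable M" by fact
  have "AE x in M. ennreal ?w * nn_cond_exp M G (\<lambda>x. ennreal ((max 0 (zb x - \<xi> / \<alpha>))\<^sup>2)) x
      = nn_cond_exp M G (\<lambda>x. ennreal ?w * ennreal ((max 0 (zb x - \<xi> / \<alpha>))\<^sup>2)) x"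
    by (rule nn_cond_exp_prod) measurable
  moreover have "AE x in M. nn_cond_exp M G (\<lambda>x. ennreal ((max 0 (zb x - \<xi> / \<alpha>))\<^sup>2)) x
      \<le> ennreal (?c * (max 0 (za x - \<xi> / \<alpha>))\<^sup>2 + ?K)"
    using assms \<open>0 \<le> t\<close> by (intro nn_cond_exp_excess_square_le) auto
  ultimately show ?thesis
  proof eventually_elim
    case (elim x)
    have "nn_cond_exp M G (\<lambda>x. ennreal ((real (Suc n) + 1) powr \<eta> * (max 0 (zb x - \<xi> / \<alpha>))\<^sup>2)) x
        = ennreal ?w * nn_cond_exp M G (\<lambda>x. ennreal ((max 0 (zb x - \<xi> / \<alpha>))\<^sup>2)) x"
      using elim(1) by (simp add: ennreal_mult' add.commute)
    also have "\<dots> \<le> ennreal (?w * (?c * (max 0 (za x - \<xi> / \<alpha>))\<^sup>2 + ?K))"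
      using elim(2) by (auto simp: ennreal_mult' intro: mult_left_mono)
    also have "\<dots> \<le> ennreal (?e * ((real n + 1) powr \<eta> * (max 0 (za x - \<xi> / \<alpha>))\<^sup>2) + ?w * ?K)"
      by (intro ennreal_leI weighted) simp
    finally show ?case .
  qed
qed

lemma summable_powr_shift:
  fixes a :: "nat \<Rightarrow> real" and \<eta> :: real
  assumes "summable (\<lambda>n. (real n + 1) powr \<eta> * a n)" and "\<And>n. 0 \<le> a n" and "0 \<le> \<eta>"
  shows "summable (\<lambda>n. (real n + 2) powr \<eta> * a n)"
proof (rule summable_comparison_test')
  show "summable (\<lambda>n. 2 powr \<eta> * ((real n + 1) powr \<eta> * a n))"
    using assms(1) by (rule summable_mult)
next
  fix n
  have "(real n + 2) powr \<eta> * a n \<le> (2 * (real n + 1)) powr \<eta> * a n"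
    using assms(2,3) by (intro mult_right_mono powr_mono2) auto
  also have "\<dots> = 2 powr \<eta> * ((real n + 1) powr \<eta> * a n)"
    by (subst powr_mult) auto
  finally show "norm ((real n + 2) powr \<eta> * a n) \<le> 2 powr \<eta> * ((real n + 1) powr \<eta> * a n)"
    using assms(2)[of n] by simp
qed

lemma powr_infdist_tendsto_zero:
  fixes z :: "nat \<Rightarrow> real" and c \<eta> :: real
  assumes lim: "(\<lambda>n. (real n + 1) powr \<eta> * (max 0 (z n - c))\<^sup>2) \<longlonglongrightarrow> 0"
    and z_nonneg: "\<And>n. 0 \<le> z n" and "0 \<le> c" and "0 \<le> \<eta>"
  shows "(\<lambda>n. real n powr (\<eta> / 2) * infdist (z n) {0..c}) \<longlonglongrightarrow> 0"
proof (rule real_tendsto_sandwich[where f = "\<lambda>n. 0"])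
  have "real n powr (\<eta> / 2) * infdist (z n) {0..c} \<le> sqrt ((real n + 1) powr \<eta> * (max 0 (z n - c))\<^sup>2)"
    for n
  proof -
    have "real n powr (\<eta> / 2) = sqrt (real n powr \<eta>)"
      by (simp add: powr_half_sqrt[symmetric] powr_powr)
    then have "real n powr (\<eta> / 2) * infdist (z n) {0..c} = sqrt (real n powr \<eta> * (max 0 (z n - c))\<^sup>2)"
      using z_nonneg[of n] \<open>0 \<le> c\<close> by (simp add: infdist_atLeastAtMost real_sqrt_mult)
    also have "\<dots> \<le> sqrt ((real n + 1) powr \<eta> * (max 0 (z n - c))\<^sup>2)"
      using \<open>0 \<le> \<eta>\<close> by (intro real_sqrt_le_mono mult_right_mono powr_mono2) auto
    finally show ?thesis .
  qed
  then show "eventually (\<lambda>n. real n powr (\<eta> / 2) * infdist (z n) {0..c}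
      \<le> sqrt ((real n + 1) powr \<eta> * (max 0 (z n - c))\<^sup>2)) sequentially"
    by simp
  show "(\<lambda>n. sqrt ((real n + 1) powr \<eta> * (max 0 (z n - c))\<^sup>2)) \<longlonglongrightarrow> 0"
    using tendsto_real_sqrt[OF lim] by simp
qed (simp_all add: infdist_nonneg)

lemma step_size_threshold:
  fixes T :: "nat \<Rightarrow> real" and \<alpha> B \<eta> :: real
  assumes "0 < \<alpha>" and "0 < \<eta>" and "\<alpha> \<le> B" and "summable (\<lambda>n. (T n)\<^sup>2)"
    and "liminf (\<lambda>n. ereal (real n * T n)) > ereal (\<eta> / (2 * \<alpha>))"
  obtains l N where "0 < l" and "0 < \<alpha> - \<eta> / (2 * l)"
    and "\<And>n. N \<le> n \<Longrightarrow> l < real n * T n \<and> 2 * B\<^sup>2 * T n \<le> \<alpha> - \<eta> / (2 * l) \<and> \<alpha> * T n \<le> 1"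
proof -
  obtain l where l_gt: "\<eta> / (2 * \<alpha>) < l" and l_liminf: "ereal l < liminf (\<lambda>n. ereal (real n * T n))"
    using ereal_dense2[OF assms(5)] by auto
  have "0 < \<eta> / (2 * \<alpha>)"
    using assms(1,2) by simp
  then have "0 < l" using l_gt by linarith
  then have "0 < \<alpha> - \<eta> / (2 * l)"
    using l_gt \<open>0 < \<alpha>\<close> by (simp add: field_simps)
  have "0 < B" using assms(1,3) by linarith
  have "(\<lambda>n. sqrt ((T n)\<^sup>2)) \<longlonglongrightarrow> sqrt 0"
    by (intro tendsto_real_sqrt summable_LIMSEQ_zero assms(4))
  then have "T \<longlonglongrightarrow> 0" by (simp add: tendsto_rabs_zero_iff)
  then have "eventually (\<lambda>n. T n < (\<alpha> - \<eta> / (2 * l)) / (2 * B\<^sup>2)) sequentially"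
    "eventually (\<lambda>n. T n < 1 / \<alpha>) sequentially"
    using \<open>0 < B\<close> \<open>0 < \<alpha> - \<eta> / (2 * l)\<close> \<open>0 < \<alpha>\<close> by (auto intro: order_tendstoD(2))
  moreover have "eventually (\<lambda>n. l < real n * T n) sequentially"
    using less_LiminfD[OF l_liminf] by simp
  ultimately have "eventually (\<lambda>n.
      l < real n * T n \<and> 2 * B\<^sup>2 * T n \<le> \<alpha> - \<eta> / (2 * l) \<and> \<alpha> * T n \<le> 1) sequentially"
    by eventually_elim (use \<open>0 < B\<close> \<open>0 < \<alpha>\<close> in \<open>auto simp: field_simps\<close>)
  then show ?thesis
    using that \<open>0 < l\<close> \<open>0 < \<alpha> - \<eta> / (2 * l)\<close> unfolding eventually_sequentially by blast
qed

theorem theorem3: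
  fixes M :: "'a measure" and F :: "nat \<Rightarrow> 'a measure"
    and z :: "nat \<Rightarrow> 'a \<Rightarrow> real" and T :: "nat \<Rightarrow> real"
    and \<alpha> \<xi> B\<^sub>1 \<eta> :: real
  assumes prob: "prob_space M"
    and filt_sub: "\<And>n. subalgebra M (F n)"
    and filt_mono: "\<And>n m. n \<le> m \<Longrightarrow> sets (F n) \<subseteq> sets (F m)"
    and alpha_pos: "\<alpha> > 0" and xi_pos: "\<xi> > 0"
    and T_range: "\<And>n. 0 < T n \<and> T n < 1"
    and T_decr: "\<And>n. T (Suc n) < T n"
    and T_not_summable: "\<not> summable T"
    and T_sq_summable: "summable (\<lambda>n. (T n)\<^sup>2)"
    and z_nonneg: "\<And>n \<omega>. \<omega> \<in> space M \<Longrightarrow> z n \<omega> \<ge> 0"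
    and z_adapted: "\<And>n. z n \<in> borel_measurable (F n)"
    and z_drift: "\<And>n. AE \<omega> in M. nn_cond_exp M (F n) (\<lambda>\<omega>'. ennreal (z (Suc n) \<omega>')) \<omega>
                     \<le> ennreal ((1 - \<alpha> * T n) * z n \<omega> + \<xi> * T n)"
    and B1_ge: "B\<^sub>1 \<ge> \<alpha>"
    and z_incr: "\<And>n. AE \<omega> in M. \<bar>z (Suc n) \<omega> - z n \<omega>\<bar> \<le> B\<^sub>1 * T n * (z n \<omega> + 1)"
    and eta_pos: "\<eta> > 0"
    and A1: "liminf (\<lambda>n. ereal (real n * T n)) > ereal (\<eta> / (2 * \<alpha>))"
    and A2: "summable (\<lambda>n. (real n + 1) powr \<eta> * (T n)\<^sup>2)"
  shows "AE \<omega> in M. (\<lambda>n. real n powr (\<eta> / 2) * infdist (z n \<omega>) {0 .. \<xi> / \<alpha>}) \<longlonglongrightarrow> 0"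
proof -
  interpret prob_space M by (rule prob)
  define W where "W n x = (real n + 1) powr \<eta> * (max 0 (z n x - \<xi> / \<alpha>))\<^sup>2" for n x
  define f where "f n = (real n + 2) powr \<eta> * (2 * B\<^sub>1\<^sup>2 * (\<xi> / \<alpha> + 1)\<^sup>2 * (T n)\<^sup>2)" for n
  obtain l N where "0 < l" and "0 < \<alpha> - \<eta> / (2 * l)" and N: "\<And>n. N \<le> n \<Longrightarrow>
      l < real n * T n \<and> 2 * B\<^sub>1\<^sup>2 * T n \<le> \<alpha> - \<eta> / (2 * l) \<and> \<alpha> * T n \<le> 1"
    using step_size_threshold[OF alpha_pos eta_pos B1_ge T_sq_summable A1] by blast
  have "summable (\<lambda>n. (real n + 1) powr \<eta> * (2 * B\<^sub>1\<^sup>2 * (\<xi> / \<alpha> + 1)\<^sup>2 * (T n)\<^sup>2))"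
    using summable_mult[OF A2, of "2 * B\<^sub>1\<^sup>2 * (\<xi> / \<alpha> + 1)\<^sup>2"] by (simp add: mult_ac)
  then have "summable f"
    unfolding f_def using eta_pos by (intro summable_powr_shift) auto
  have "AE x in M. (\<lambda>n. W n x) \<longlonglongrightarrow> 0"
  proof (rule AE_tendsto_zero_of_nn_cond_exp_contraction[OF prob filt_sub filt_mono])
    show "W n \<in> borel_measurable (F n)" for n
      using z_adapted[of n] unfolding W_def by measurable
    show "AE x in M. nn_cond_exp M (F n) (\<lambda>x. ennreal (W (Suc n) x)) x
        \<le> ennreal (exp (- (\<alpha> - \<eta> / (2 * l)) * T n) * W n x + f n)" if "N \<le> n" for n
      unfolding W_def f_def using N[OF that] z_adapted z_drift z_incr z_nonneg filt_sub alpha_pos xi_pos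
        B1_ge eta_pos \<open>0 < l\<close> measurable_from_subalg[OF filt_sub z_adapted]
      by (intro nn_cond_exp_weighted_excess_square_le sigma_finite_subalgebraI) auto
  qed (use T_range T_not_summable \<open>summable f\<close> \<open>0 < \<alpha> - \<eta> / (2 * l)\<close> in
      \<open>auto simp: W_def less_imp_le f_def[abs_def]\<close>)
  with AE_space show ?thesis
    by eventually_elim
      (use z_nonneg alpha_pos xi_pos eta_pos in \<open>auto simp: W_def intro!: powr_infdist_tendsto_zero\<close>)
qed

end
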